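(* Let $w\ge0$ be integrable on $\mathbb{T}$ and let $\nu$ be a positive finite singular Borel measure on $\mathbb{T}$ with $\nu(\operatorname{core}(w))=0$. Then there is a sequence of non-negative bounded functions $\{f_n\}_{n\ge1}$ on $\mathbb{T}$ such that: (i) the measures $f_n\,dm$ converge weak-star to $\nu$; (ii) $\int_{\mathbb{T}}f_n\,dm=\nu(\mathbb{T})$ for all $n$; (iii) $0\le f_n(x)\le\log^+(1/w(x))$ for all $x\in\mathbb{T}$ and all $n$, where the right-hand side is interpreted as $+\infty$ when $w(x)=0$.
   Context: $m$ is normalized arc-length measure on the unit circle $\mathbb{T}$. $\operatorname{core}(w)$ is the union of all open arcs $I\subset\mathbb{T}$ with $\int_I\log w\,dm>-\infty$. $\log^+x=\max(0,\log x)$. *)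

theory Defs
  imports "HOL-Analysis.Analysis"
begin

abbreviation circ :: "complex set" where "circ \<equiv> sphere 0 1"

definition borelT :: "complex measure" where
  "borelT = restrict_space borel circ"

definition mT :: "complex measure" where
  "mT = distr (lebesgue_on {0..<1}) borelT (\<lambda>t. cis (2 * pi * t))"

definition open_arc :: "complex set \<Rightarrow> bool" where
  "open_arc I \<longleftrightarrow> (\<exists>a b. a < b \<and> b - a \<le> 1 \<and> I = (\<lambda>t. cis (2 * pi * t)) ` {a<..<b})"

definition logm :: "(complex \<Rightarrow> real) \<Rightarrow> complex \<Rightarrow> ennreal" where
  "logm w x = (if w x = 0 then \<infinity> else ennreal (max 0 (ln (1 / w x))))"

text \<open>core(w): union of open arcs I with integral over I of log w > -infinity.
  Since log^+ w <= w is integrable, this is equivalent to finiteness of the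
  integral over I of the negative part log^+(1/w).\<close>
definition core :: "(complex \<Rightarrow> real) \<Rightarrow> complex set" where
  "core w = \<Union>{I. open_arc I \<and> (\<integral>\<^sup>+ x. indicator I x * logm w x \<partial>mT) < \<infinity>}"

definition singular_wrt :: "complex measure \<Rightarrow> complex measure \<Rightarrow> bool" where
  "singular_wrt \<nu> \<mu> \<longleftrightarrow> (\<exists>N \<in> sets \<mu>. emeasure \<mu> N = 0 \<and> emeasure \<nu> (space \<nu> - N) = 0)"

end

theory Submission
  imports Defs
begin

text \<open>
  Fix N and shift the N consecutive arcs of parameter length 1/N so that their endpoints
  carry no \<nu>-mass (only countably many points do). An arc A charged by \<nu> is not contained
  in core w, so log^+(1/w) has infinite integral over A, and by monotone convergence a single
  truncation h = min(M, log^+(1/w)) has integral at least \<nu>(A) over every arc A. Scaling h on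
  each arc A by the factor \<nu>(A) / (integral of h over A) \<le> 1 gives a bounded density f with
  0 \<le> f \<le> log^+(1/w) whose integral over every arc A is exactly \<nu>(A). Comparing both the
  integral of g f dm and the integral of g d\<nu> over A with g(x) \<nu>(A) for a point x of A bounds
  the difference of the integrals of g f dm and g d\<nu> by 2 \<nu>(circle) times the oscillation of
  g on arcs of length 2\<pi>/N, which tends to 0 for continuous g.
\<close>

section \<open>The circle and its arcs\<close>

definition circ_param :: "real \<Rightarrow> complex" where
  "circ_param t = cis (2 * pi * t)"

lemma norm_cis_minus_cis_le: "norm (cis a - cis b) \<le> \<bar>a - b\<bar>"
proof -
  define x where "x = a - b"
  have "cis a - cis b = cis b * (cis x - 1)"
    by (simp add: x_def right_diff_distrib cis_mult)
  then have "norm (cis a - cis b) = norm (cis x - 1)"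
    by (simp add: norm_mult)
  have "(norm (cis x - 1))\<^sup>2 = (cos x - 1)\<^sup>2 + (sin x)\<^sup>2"
    by (simp add: cmod_power2)
  also have "\<dots> = 2 - 2 * cos x"
    using sin_cos_squared_add[of x] by (simp add: power2_diff)
  also have "cos x = 1 - 2 * (sin (x / 2))\<^sup>2"
    using cos_double_sin[of "x / 2"] by simp
  finally have "(norm (cis x - 1))\<^sup>2 = (2 * \<bar>sin (x / 2)\<bar>)\<^sup>2"
    by (simp add: power_mult_distrib)
  then have "norm (cis x - 1) = 2 * \<bar>sin (x / 2)\<bar>"
    by (rule power2_eq_imp_eq) auto
  also have "\<dots> \<le> 2 * \<bar>x / 2\<bar>"
    by (intro mult_left_mono abs_sin_x_le_abs_x) auto
  finally show ?thesis
    using \<open>norm (cis a - cis b) = norm (cis x - 1)\<close> by (simp add: x_def)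
qed

lemma cis_2pi_eq_circ_param: "(\<lambda>t. cis (2 * pi * t)) = circ_param"
  by (simp add: circ_param_def fun_eq_iff)

lemma norm_circ_param [simp]: "norm (circ_param t) = 1"
  by (simp add: circ_param_def)

lemma continuous_on_circ_param: "continuous_on S circ_param"
  unfolding circ_param_def by (intro continuous_intros)

lemma dist_circ_param_le: "dist (circ_param s) (circ_param t) \<le> 2 * pi * \<bar>s - t\<bar>"
  using norm_cis_minus_cis_le[of "2 * pi * s" "2 * pi * t"]
  by (simp add: circ_param_def dist_norm abs_mult flip: right_diff_distrib)

lemma circ_param_add_of_int: "circ_param (t + of_int k) = circ_param t"
  by (simp add: circ_param_def distrib_left flip: cis_mult)

lemma circ_param_inj:
  assumes "circ_param s = circ_param t" "\<bar>s - t\<bar> < 1"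
  shows "s = t"
proof -
  have "cis (2 * pi * s) = cis (2 * pi * t) * cis (2 * pi * (s - t))"
    by (simp add: cis_mult algebra_simps)
  with assms(1) have "cos (2 * pi * (s - t)) = 1"
    by (metis circ_param_def cis.sel(1) cis_neq_zero mult_cancel_left1 one_complex.sel(1))
  then obtain k :: int where "2 * pi * (s - t) = real_of_int k * 2 * pi"
    using cos_one_2pi_int by blast
  then have "s - t = k" by simp
  with assms(2) have "k = 0" by linarith
  with \<open>s - t = k\<close> show ?thesis by simp
qed

lemma circ_param_surj:
  assumes "x \<in> circ"
  shows "\<exists>t\<in>{s..<s + 1}. x = circ_param t"
proof -
  define t0 where "t0 = Arg x / (2 * pi)"
  have "x \<noteq> 0" and "sgn x = x"
    using assms by (auto simp: sgn_div_norm)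
  then have "circ_param t0 = x"
    using cis_Arg[of x] by (simp add: circ_param_def t0_def)
  define t where "t = t0 - of_int \<lfloor>t0 - s\<rfloor>"
  have "circ_param t = x"
    using circ_param_add_of_int[of t0 "- \<lfloor>t0 - s\<rfloor>"] \<open>circ_param t0 = x\<close>
    by (simp add: t_def)
  moreover have "t \<in> {s..<s + 1}"
    unfolding t_def by auto linarith+
  ultimately show ?thesis by metis
qed

lemma space_borelT [simp]: "space borelT = circ"
  by (simp add: borelT_def space_restrict_space)

lemma sets_mT [simp]: "sets mT = sets borelT"
  by (simp add: mT_def)

lemma space_mT [simp]: "space mT = circ"
  by (simp add: mT_def)

lemma sets_borelT_iff: "A \<in> sets borelT \<longleftrightarrow> A \<subseteq> circ \<and> A \<in> sets borel"
  unfolding borelT_def by (auto simp: sets_restrict_space_iff)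

lemma finite_measure_mT: "finite_measure mT"
proof -
  have "circ_param \<in> lebesgue_on {0..<1} \<rightarrow>\<^sub>M borelT"
    unfolding borelT_def
    by (intro measurable_restrict_space2 continuous_imp_measurable_on_sets_lebesgue
        continuous_on_circ_param) auto
  moreover have "finite_measure (lebesgue_on {0..<(1::real)})"
    by (intro finite_measureI) (simp add: emeasure_restrict_space)
  ultimately show ?thesis
    unfolding mT_def cis_2pi_eq_circ_param by (intro finite_measure.finite_measure_distr)
qed

lemma open_arc_iff: "open_arc I \<longleftrightarrow> (\<exists>a b. a < b \<and> b - a \<le> 1 \<and> I = circ_param ` {a<..<b})"
  unfolding open_arc_def cis_2pi_eq_circ_param ..

lemma open_arc_eq_circ_minus_closed_arc:
  assumes "a < b" "b - a \<le> 1"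
  shows "circ_param ` {a<..<b} = circ - circ_param ` {b..a + 1}"
proof (intro equalityI subsetI)
  fix x assume "x \<in> circ_param ` {a<..<b}"
  then obtain t where t: "t \<in> {a<..<b}" "x = circ_param t" by auto
  have "circ_param t \<noteq> circ_param t'" if "t' \<in> {b..a + 1}" for t'
    using circ_param_inj[of t t'] t that by auto
  then have "x \<notin> circ_param ` {b..a + 1}"
    using t(2) by fastforce
  then show "x \<in> circ - circ_param ` {b..a + 1}"
    using t by simp
next
  fix x assume x: "x \<in> circ - circ_param ` {b..a + 1}"
  then obtain t where t: "t \<in> {a..<a + 1}" "x = circ_param t"
    using circ_param_surj by blast
  have "x \<noteq> circ_param a"
    using x assms circ_param_add_of_int[of a 1] by (auto intro: rev_image_eqI[of "a + 1"])
  then have "t \<noteq> a"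
    using t by auto
  moreover have "\<not> b \<le> t"
    using x t by auto
  ultimately show "x \<in> circ_param ` {a<..<b}"
    using t by auto
qed

lemma openin_open_arc:
  assumes "open_arc I"
  shows "openin (top_of_set circ) I"
proof -
  obtain a b where ab: "a < b" "b - a \<le> 1" "I = circ_param ` {a<..<b}"
    using assms open_arc_iff by auto
  have "closed (circ_param ` {b..a + 1})"
    by (intro compact_imp_closed compact_continuous_image continuous_on_circ_param compact_Icc)
  then have "closedin (top_of_set circ) (circ_param ` {b..a + 1})"
    by (intro closed_subset) auto
  then show ?thesis
    using ab by (simp add: open_arc_eq_circ_minus_closed_arc openin_diff openin_subtopology_self)
qed

lemma openin_circ_imp_sets_borelT: "openin (top_of_set circ) U \<Longrightarrow> U \<in> sets borelT"
  by (auto simp: openin_open sets_borelT_iff)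

lemma open_arc_imp_sets_borelT: "open_arc I \<Longrightarrow> I \<in> sets borelT"
  by (simp add: openin_open_arc openin_circ_imp_sets_borelT)

lemma core_sets_borelT: "core w \<in> sets borelT"
  unfolding core_def by (intro openin_circ_imp_sets_borelT openin_Union) (auto simp: openin_open_arc)

lemma nn_integral_logm_open_arc_eq_top:
  assumes "open_arc I" "sets \<nu> = sets borelT" "emeasure \<nu> (core w) = 0" "emeasure \<nu> I \<noteq> 0"
  shows "(\<integral>\<^sup>+ x. indicator I x * logm w x \<partial>mT) = \<infinity>"
proof (rule ccontr)
  assume "(\<integral>\<^sup>+ x. indicator I x * logm w x \<partial>mT) \<noteq> \<infinity>"
  then have "I \<subseteq> core w"
    using assms(1) by (auto simp: core_def top.not_eq_extremum)
  then have "emeasure \<nu> I \<le> emeasure \<nu> (core w)"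
    using assms(2) core_sets_borelT by (intro emeasure_mono) auto
  with assms(3,4) show False by simp
qed

section \<open>Partitions into arcs of equal length\<close>

definition arc_partition :: "real \<Rightarrow> nat \<Rightarrow> nat \<Rightarrow> complex set" where
  "arc_partition s N j = circ_param ` {s + j / N <..< s + (real j + 1) / N}"

lemma open_arc_arc_partition: "0 < N \<Longrightarrow> open_arc (arc_partition s N j)"
  unfolding open_arc_iff arc_partition_def
  by (rule exI[of _ "s + j / N"], rule exI[of _ "s + (real j + 1) / N"]) (auto simp: field_simps)

lemma disjoint_family_arc_partition: "disjoint_family_on (arc_partition s N) {..<N}"
proof -
  have "arc_partition s N j \<inter> arc_partition s N k = {}" if "j < k" "k < N" for j k
  proof (rule ccontr)
    assume "arc_partition s N j \<inter> arc_partition s N k \<noteq> {}"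
    then obtain t t' where "t \<in> {s + j / N <..< s + (real j + 1) / N}"
      and "t' \<in> {s + k / N <..< s + (real k + 1) / N}" and eq: "circ_param t = circ_param t'"
      unfolding arc_partition_def by blast
    then have t: "s + j / N < t" "t < s + (real j + 1) / N"
      and t': "s + k / N < t'" "t' < s + (real k + 1) / N"
      by simp_all
    have "(real j + 1) / N \<le> k / N" "0 \<le> real j / N" "(real k + 1) / N \<le> 1"
      using that by (auto simp: divide_right_mono)
    with t t' have "t < t'" "t' - t < 1" by linarith+
    with circ_param_inj[OF eq] show False by simp
  qed
  then show ?thesis
    unfolding disjoint_family_on_def by (metis inf_commute lessThan_iff nat_neq_iff)
qed

lemma dist_arc_partition_le:
  assumes "x \<in> arc_partition s N j" "y \<in> arc_partition s N j"
  shows "dist x y \<le> 2 * pi / N"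
proof -
  obtain t t' where "t \<in> {s + j / N <..< s + (real j + 1) / N}" "x = circ_param t"
    and "t' \<in> {s + j / N <..< s + (real j + 1) / N}" "y = circ_param t'"
    using assms unfolding arc_partition_def by blast
  moreover have "s + (real j + 1) / N - (s + j / N) = 1 / N"
    by (simp add: add_divide_distrib)
  ultimately have "\<bar>t - t'\<bar> \<le> 1 / N" "dist x y \<le> 2 * pi * \<bar>t - t'\<bar>"
    using dist_circ_param_le by auto
  then have "dist x y \<le> 2 * pi * (1 / N)"
    by (meson mult_left_mono order_trans pi_ge_zero zero_le_mult_iff zero_le_numeral)
  then show ?thesis by simp
qed

lemma circ_minus_arc_partition_subset:
  assumes "0 < N"
  shows "circ - (\<Union>j<N. arc_partition s N j) \<subseteq> (\<lambda>j::nat. circ_param (s + j / N)) ` {..<N}"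
proof
  fix x assume x: "x \<in> circ - (\<Union>j<N. arc_partition s N j)"
  then obtain t where t: "t \<in> {s..<s + 1}" "x = circ_param t"
    using circ_param_surj by blast
  define j where "j = nat \<lfloor>(t - s) * N\<rfloor>"
  have "0 \<le> (t - s) * N" "(t - s) * N < N"
    using t assms by auto
  then have "real j \<le> (t - s) * N" "(t - s) * N < real j + 1" "j < N"
    unfolding j_def by linarith+
  then have j: "s + j / N \<le> t" "t < s + (real j + 1) / N" "j < N"
    using assms by (auto simp: field_simps)
  show "x \<in> (\<lambda>j::nat. circ_param (s + j / N)) ` {..<N}"
  proof (cases "t = s + j / N")
    case False
    then have "x \<in> arc_partition s N j"
      using j t by (auto simp: arc_partition_def)
    with x j show ?thesis by auto
  qed (use j t in auto)
qed

section \<open>Densities matching a measure on a partition\<close>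

definition ae_partition :: "'a measure \<Rightarrow> (nat \<Rightarrow> 'a set) \<Rightarrow> nat \<Rightarrow> bool" where
  "ae_partition \<nu> A K \<longleftrightarrow>
     (\<forall>j<K. A j \<in> sets \<nu>) \<and> disjoint_family_on A {..<K} \<and>
     emeasure \<nu> (space \<nu> - (\<Union>j<K. A j)) = 0"

lemma SUP_min_of_nat_ennreal: "(SUP M. min (of_nat M) x) = (x :: ennreal)"
proof (rule LIMSEQ_unique)
  show "(\<lambda>M. min (of_nat M) x) \<longlonglongrightarrow> (SUP M. min (of_nat M) x)"
    by (intro LIMSEQ_SUP monoI min.mono) auto
  show "(\<lambda>M. min (of_nat M) x) \<longlonglongrightarrow> x"
    using tendsto_min[OF of_nat_tendsto_top_ennreal tendsto_const, of x] by simp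
qed

lemma exists_truncation_level:
  fixes \<phi> :: "'a \<Rightarrow> ennreal" and A :: "nat \<Rightarrow> 'a set"
  assumes "finite_measure \<nu>" "\<phi> \<in> borel_measurable \<mu>" "\<And>j. j < K \<Longrightarrow> A j \<in> sets \<mu>"
    and "\<And>j. j < K \<Longrightarrow> emeasure \<nu> (A j) \<noteq> 0 \<Longrightarrow> (\<integral>\<^sup>+ x. indicator (A j) x * \<phi> x \<partial>\<mu>) = \<infinity>"
  shows "\<exists>M::nat. \<forall>j<K. emeasure \<nu> (A j) \<le> (\<integral>\<^sup>+ x. indicator (A j) x * min (of_nat M) (\<phi> x) \<partial>\<mu>)"
proof -
  let ?F = "\<lambda>j (M::nat). \<integral>\<^sup>+ x. indicator (A j) x * min (of_nat M) (\<phi> x) \<partial>\<mu>"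
  have mono: "mono (?F j)" for j
    by (intro monoI nn_integral_mono mult_left_mono min.mono) auto
  have "eventually (\<lambda>M. emeasure \<nu> (A j) \<le> ?F j M) sequentially" if j: "j < K" for j
  proof (cases "emeasure \<nu> (A j) = 0")
    case False
    have "(SUP M. ?F j M) = (\<integral>\<^sup>+ x. (SUP M. indicator (A j) x * min (of_nat M) (\<phi> x)) \<partial>\<mu>)"
      using assms(2) assms(3)[OF j]
      by (intro nn_integral_monotone_convergence_SUP[symmetric] incseq_SucI le_funI mult_left_mono)
        (auto intro!: min.coboundedI1 add_increasing)
    also have "\<dots> = \<infinity>"
      using assms(4)[OF j False] by (simp add: SUP_mult_left_ennreal[symmetric] SUP_min_of_nat_ennreal)
    finally have "(SUP M. ?F j M) = \<infinity>" .
    moreover have "emeasure \<nu> (A j) < \<infinity>"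
      using finite_measure.emeasure_finite[OF assms(1)] by (simp add: less_top)
    ultimately obtain M where M: "emeasure \<nu> (A j) < ?F j M"
      by (auto simp: SUP_eq_top_iff)
    show ?thesis
    proof (rule eventually_sequentiallyI)
      fix M' assume "M \<le> M'"
      with mono have "?F j M \<le> ?F j M'"
        by (rule monoD)
      with M show "emeasure \<nu> (A j) \<le> ?F j M'" by simp
    qed
  qed simp
  then have "eventually (\<lambda>M. \<forall>j\<in>{..<K}. emeasure \<nu> (A j) \<le> ?F j M) sequentially"
    by (intro eventually_ball_finite) auto
  then show ?thesis
    by (auto simp: eventually_sequentially)
qed

lemma exists_bounded_minorant_dominating_masses:
  fixes \<phi> :: "'a \<Rightarrow> ennreal" and A :: "nat \<Rightarrow> 'a set"
  assumes \<mu>: "finite_measure \<mu>" and \<nu>: "finite_measure \<nu>" and \<phi>: "\<phi> \<in> borel_measurable \<mu>"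
    and A: "\<And>j. j < K \<Longrightarrow> A j \<in> sets \<mu>"
    and \<phi>_top: "\<And>j. j < K \<Longrightarrow> emeasure \<nu> (A j) \<noteq> 0 \<Longrightarrow> (\<integral>\<^sup>+ x. indicator (A j) x * \<phi> x \<partial>\<mu>) = \<infinity>"
  obtains h where "h \<in> borel_measurable \<mu>" "bounded (range h)" "\<And>x. 0 \<le> h x" "\<And>x. ennreal (h x) \<le> \<phi> x"
    and "\<And>j. j < K \<Longrightarrow> measure \<nu> (A j) \<le> (\<integral>x. indicator (A j) x * h x \<partial>\<mu>)"
proof -
  interpret \<mu>: finite_measure \<mu> by (rule \<mu>)
  obtain M :: nat where
    M: "\<And>j. j < K \<Longrightarrow> emeasure \<nu> (A j) \<le> (\<integral>\<^sup>+ x. indicator (A j) x * min (of_nat M) (\<phi> x) \<partial>\<mu>)"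
    using exists_truncation_level[where K = K and A = A, OF \<nu> \<phi> A \<phi>_top] by blast
  define h where "h x = enn2real (min (of_nat M) (\<phi> x))" for x
  have h_enn: "ennreal (h x) = min (of_nat M) (\<phi> x)" for x
    unfolding h_def by (intro ennreal_enn2real) (simp add: min_less_iff_disj of_nat_less_top)
  have h_nonneg: "0 \<le> h x" for x
    by (simp add: h_def)
  have h_le: "h x \<le> M" for x
  proof -
    have "ennreal (h x) \<le> ennreal (real M)"
      by (simp add: h_enn ennreal_of_nat_eq_real_of_nat)
    then show ?thesis by simp
  qed
  show ?thesis
  proof (rule that)
    show h_meas: "h \<in> borel_measurable \<mu>"
      unfolding h_def using \<phi> by measurable
    show "bounded (range h)"
      using h_nonneg h_le by (auto simp: bounded_iff intro!: exI[of _ "real M"])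
    show "0 \<le> h x" "ennreal (h x) \<le> \<phi> x" for x
      using h_nonneg h_enn by auto
    show "measure \<nu> (A j) \<le> (\<integral>x. indicator (A j) x * h x \<partial>\<mu>)" if j: "j < K" for j
    proof -
      have "integrable \<mu> (\<lambda>x. indicator (A j) x * h x)"
        using A[OF j] h_meas h_nonneg h_le
        by (intro \<mu>.integrable_const_bound[where B = M] AE_I2) (auto simp: indicator_def)
      then have "ennreal (\<integral>x. indicator (A j) x * h x \<partial>\<mu>)
          = (\<integral>\<^sup>+ x. indicator (A j) x * min (of_nat M) (\<phi> x) \<partial>\<mu>)"
        using h_nonneg
        by (subst nn_integral_eq_integral[symmetric])
          (auto simp: h_enn indicator_def intro!: nn_integral_cong)
      then have "ennreal (measure \<nu> (A j)) \<le> ennreal (\<integral>x. indicator (A j) x * h x \<partial>\<mu>)"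
        using M[OF j] by (simp add: finite_measure.emeasure_eq_measure[OF \<nu>])
      moreover have "0 \<le> (\<integral>x. indicator (A j) x * h x \<partial>\<mu>)"
        using h_nonneg by (intro integral_nonneg_AE AE_I2) auto
      ultimately show ?thesis by simp
    qed
  qed
qed

text \<open>For I = 0 (which forces m = 0) this relies on the convention m / 0 = 0.\<close>

lemma divide_le_one_mult_cancel:
  fixes m I :: real
  assumes "0 \<le> m" "m \<le> I"
  shows "0 \<le> m / I \<and> m / I \<le> 1 \<and> m / I * I = m"
  using assms by (cases "I = 0") (auto simp: divide_le_eq_1)

lemma bounded_range_if_dominated:
  fixes f h :: "'a \<Rightarrow> real"
  assumes "bounded (range h)" "\<And>x. 0 \<le> f x \<and> f x \<le> h x"
  shows "bounded (range f)"
proof -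
  obtain B where B: "\<And>x. \<bar>h x\<bar> \<le> B"
    using assms(1) by (auto simp: bounded_iff)
  have "\<bar>f x\<bar> \<le> B" for x
    using assms(2)[of x] B[of x] by linarith
  then show ?thesis
    by (auto simp: bounded_iff)
qed

lemma exists_mass_matching_density:
  fixes \<mu> \<nu> :: "'a measure" and \<phi> :: "'a \<Rightarrow> ennreal"
  assumes \<mu>: "finite_measure \<mu>" and \<nu>: "finite_measure \<nu>" and sets_eq: "sets \<nu> = sets \<mu>"
    and A: "ae_partition \<nu> A K" and \<phi>: "\<phi> \<in> borel_measurable \<mu>"
    and \<phi>_top: "\<And>j. j < K \<Longrightarrow> emeasure \<nu> (A j) \<noteq> 0 \<Longrightarrow> (\<integral>\<^sup>+ x. indicator (A j) x * \<phi> x \<partial>\<mu>) = \<infinity>"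
  obtains f where "f \<in> borel_measurable \<mu>" "bounded (range f)" "\<And>x. 0 \<le> f x" "\<And>x. ennreal (f x) \<le> \<phi> x"
    and "\<And>x. x \<notin> (\<Union>j<K. A j) \<Longrightarrow> f x = 0"
    and "\<And>j. j < K \<Longrightarrow> (\<integral>x. indicator (A j) x * f x \<partial>\<mu>) = measure \<nu> (A j)"
proof -
  have A_sets: "A j \<in> sets \<mu>" if "j < K" for j
    using A that sets_eq by (auto simp: ae_partition_def)
  obtain h where h_meas: "h \<in> borel_measurable \<mu>" and h_bounded: "bounded (range h)"
    and h_nonneg: "\<And>x. 0 \<le> h x" and h_le: "\<And>x. ennreal (h x) \<le> \<phi> x"
    and h_mass: "\<And>j. j < K \<Longrightarrow> measure \<nu> (A j) \<le> (\<integral>x. indicator (A j) x * h x \<partial>\<mu>)"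
    using exists_bounded_minorant_dominating_masses[where K = K and A = A, OF \<mu> \<nu> \<phi> A_sets \<phi>_top]
    by blast
  define I where "I j = (\<integral>x. indicator (A j) x * h x \<partial>\<mu>)" for j
  define c where "c j = measure \<nu> (A j) / I j" for j
  have c: "0 \<le> c j \<and> c j \<le> 1 \<and> c j * I j = measure \<nu> (A j)" if "j < K" for j
    unfolding c_def I_def using h_mass[OF that] by (intro divide_le_one_mult_cancel) simp_all
  define f where "f x = (\<Sum>j<K. c j * indicator (A j) x) * h x" for x
  have f_on: "f x = c j * h x" if "j < K" "x \<in> A j" for j x
    using A that unfolding f_def ae_partition_def
    by (subst sum_indicator_disjoint_family[where j = j]) auto
  have f_off: "f x = 0" if "x \<notin> (\<Union>j<K. A j)" for x
    using that by (auto simp: f_def indicator_def intro!: sum.neutral)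
  have f_bounds: "0 \<le> f x \<and> f x \<le> h x" for x
    using f_on f_off c h_nonneg by (cases "x \<in> (\<Union>j<K. A j)") (auto simp: mult_left_le_one_le)
  show ?thesis
  proof (rule that)
    show "f \<in> borel_measurable \<mu>"
      unfolding f_def
      by (intro borel_measurable_times borel_measurable_sum borel_measurable_indicator measurable_const
          h_meas A_sets) auto
    show "bounded (range f)"
      using h_bounded f_bounds by (rule bounded_range_if_dominated)
    show "0 \<le> f x" "ennreal (f x) \<le> \<phi> x" for x
      using f_bounds[of x] h_le[of x] by (auto intro: order_trans[OF ennreal_leI])
    show "f x = 0" if "x \<notin> (\<Union>j<K. A j)" for x
      using f_off that .
    show "(\<integral>x. indicator (A j) x * f x \<partial>\<mu>) = measure \<nu> (A j)" if j: "j < K" for j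
    proof -
      have "(\<integral>x. indicator (A j) x * f x \<partial>\<mu>) = (\<integral>x. c j * (indicator (A j) x * h x) \<partial>\<mu>)"
        using f_on[OF j] by (intro Bochner_Integration.integral_cong) (auto simp: indicator_def)
      then show ?thesis
        using c[OF j] by (simp add: I_def)
    qed
  qed
qed

lemma integral_eq_sum_indicator_integrals:
  fixes h :: "'a \<Rightarrow> complex" and A :: "nat \<Rightarrow> 'a set"
  assumes h: "integrable M h" and A: "\<And>j. j < K \<Longrightarrow> A j \<in> sets M" and disj: "disjoint_family_on A {..<K}"
    and vanish: "AE x in M. x \<notin> (\<Union>j<K. A j) \<longrightarrow> h x = 0"
  shows "(\<integral>x. h x \<partial>M) = (\<Sum>j<K. \<integral>x. indicator (A j) x * h x \<partial>M)"
proof -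
  have h_meas: "h \<in> borel_measurable M"
    using h by (rule borel_measurable_integrable)
  have meas: "(\<lambda>x. indicator (A j) x * h x) \<in> borel_measurable M" if "j < K" for j
    using A[OF that] h_meas by (intro borel_measurable_times borel_measurable_indicator)
  have "AE x in M. h x = (\<Sum>j<K. indicator (A j) x * h x)"
    using vanish
  proof eventually_elim
    case (elim x)
    show ?case
    proof (cases "x \<in> (\<Union>j<K. A j)")
      case True
      then obtain k where "k < K" "x \<in> A k"
        by auto
      then show ?thesis
        using sum_indicator_disjoint_family[OF disj, of x k "\<lambda>_. h x"] by (simp add: mult.commute)
    qed (use elim in simp)
  qed
  then have "(\<integral>x. h x \<partial>M) = (\<integral>x. (\<Sum>j<K. indicator (A j) x * h x) \<partial>M)"
    using h_meas meas by (intro integral_cong_AE borel_measurable_sum) auto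
  also have "\<dots> = (\<Sum>j<K. \<integral>x. indicator (A j) x * h x \<partial>M)"
  proof (rule Bochner_Integration.integral_sum)
    show "integrable M (\<lambda>x. indicator (A j) x * h x)" if "j \<in> {..<K}" for j
      using that meas
      by (intro Bochner_Integration.integrable_bound[OF h] AE_I2) (auto simp: indicator_def)
  qed
  finally show ?thesis .
qed

lemma norm_integral_weighted_minus_const_le:
  fixes g :: "'a \<Rightarrow> complex" and f :: "'a \<Rightarrow> real"
  assumes int_gf: "integrable M (\<lambda>x. indicator A x * (g x * of_real (f x)))"
    and int_f: "integrable M (\<lambda>x. indicator A x * f x)"
    and f_nonneg: "\<And>x. 0 \<le> f x" and close: "\<And>x. x \<in> A \<Longrightarrow> norm (g x - z) \<le> \<epsilon>"
  shows "norm ((\<integral>x. indicator A x * (g x * of_real (f x)) \<partial>M) - z * of_real (\<integral>x. indicator A x * f x \<partial>M))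
    \<le> \<epsilon> * (\<integral>x. indicator A x * f x \<partial>M)"
proof -
  have int_f_complex: "integrable M (\<lambda>x. z * of_real (indicator A x * f x))"
    using int_f by (intro integrable_mult_right) (subst complex_of_real_integrable_eq)
  have diff_eq: "(\<lambda>x. indicator A x * (g x * of_real (f x)) - z * of_real (indicator A x * f x))
      = (\<lambda>x. indicator A x * ((g x - z) * of_real (f x)))"
    by (auto simp: fun_eq_iff indicator_def algebra_simps)
  have "(\<integral>x. indicator A x * (g x * of_real (f x)) \<partial>M) - z * of_real (\<integral>x. indicator A x * f x \<partial>M)
      = (\<integral>x. indicator A x * (g x * of_real (f x)) - z * of_real (indicator A x * f x) \<partial>M)"
    by (simp only: Bochner_Integration.integral_diff[OF int_gf int_f_complex] integral_mult_right_zero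
        integral_complex_of_real)
  also have "\<dots> = (\<integral>x. indicator A x * ((g x - z) * of_real (f x)) \<partial>M)"
    by (simp only: diff_eq)
  finally have eq: "(\<integral>x. indicator A x * (g x * of_real (f x)) \<partial>M)
      - z * of_real (\<integral>x. indicator A x * f x \<partial>M)
      = (\<integral>x. indicator A x * ((g x - z) * of_real (f x)) \<partial>M)" .
  have int_diff: "integrable M (\<lambda>x. indicator A x * ((g x - z) * of_real (f x)))"
    using Bochner_Integration.integrable_diff[OF int_gf int_f_complex] by (simp only: diff_eq)
  have "norm (\<integral>x. indicator A x * ((g x - z) * of_real (f x)) \<partial>M)
      \<le> (\<integral>x. norm (indicator A x * ((g x - z) * of_real (f x))) \<partial>M)"
    by (rule integral_norm_bound)
  also have "\<dots> \<le> (\<integral>x. \<epsilon> * (indicator A x * f x) \<partial>M)"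
  proof (rule integral_mono)
    show "integrable M (\<lambda>x. norm (indicator A x * ((g x - z) * of_real (f x))))"
      using int_diff by (rule integrable_norm)
    show "integrable M (\<lambda>x. \<epsilon> * (indicator A x * f x))"
      using int_f by (rule integrable_mult_right)
    show "norm (indicator A x * ((g x - z) * of_real (f x))) \<le> \<epsilon> * (indicator A x * f x)" for x
      using close[of x] f_nonneg[of x] by (cases "x \<in> A") (auto simp: norm_mult intro: mult_right_mono)
  qed
  finally show ?thesis
    unfolding eq by simp
qed

lemma norm_integral_mass_matching_block_le:
  fixes g :: "'a \<Rightarrow> complex" and f :: "'a \<Rightarrow> real"
  assumes \<mu>: "finite_measure \<mu>" and \<nu>: "finite_measure \<nu>" and sets_eq: "sets \<nu> = sets \<mu>"
    and A [measurable]: "A \<in> sets \<mu>"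
    and f [measurable]: "f \<in> borel_measurable \<mu>" "bounded (range f)" "\<And>x. 0 \<le> f x"
    and mass: "(\<integral>x. indicator A x * f x \<partial>\<mu>) = measure \<nu> A"
    and g [measurable]: "g \<in> borel_measurable \<mu>" "bounded (g ` space \<mu>)"
    and osc: "\<And>x y. x \<in> A \<Longrightarrow> y \<in> A \<Longrightarrow> norm (g x - g y) \<le> \<epsilon>"
  shows "norm ((\<integral>x. indicator A x * (g x * of_real (f x)) \<partial>\<mu>) - (\<integral>x. indicator A x * g x \<partial>\<nu>))
    \<le> 2 * \<epsilon> * measure \<nu> A"
proof (cases "A = {}")
  case False
  then obtain x0 where x0: "x0 \<in> A"
    by auto
  interpret \<mu>: finite_measure \<mu> by (rule \<mu>)
  interpret \<nu>: finite_measure \<nu> by (rule \<nu>)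
  have [measurable]: "A \<in> sets \<nu>" "g \<in> borel_measurable \<nu>" and space_eq: "space \<nu> = space \<mu>"
    using sets_eq measurable_cong_sets[OF sets_eq refl] sets_eq_imp_space_eq[OF sets_eq] by auto
  obtain Bf where "0 < Bf" "\<And>x. norm (f x) \<le> Bf"
    using f(2) by (auto simp: bounded_pos)
  moreover obtain Bg where "0 < Bg" "\<And>x. x \<in> space \<mu> \<Longrightarrow> norm (g x) \<le> Bg"
    using g(2) by (auto simp: bounded_pos)
  ultimately have int_\<mu>: "integrable \<mu> (\<lambda>x. indicator A x * (g x * of_real (f x)))"
      "integrable \<mu> (\<lambda>x. indicator A x * f x)"
    and int_\<nu>: "integrable \<nu> (\<lambda>x. indicator A x * (g x * of_real 1))"
    using space_eq
    by (intro \<mu>.integrable_const_bound[where B = "Bg * Bf"] \<mu>.integrable_const_bound[where B = Bf]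
        \<nu>.integrable_const_bound[where B = Bg] AE_I2;
        force simp: indicator_def norm_mult intro: mult_mono)+
  have "integrable \<nu> (indicator A :: 'a \<Rightarrow> real)"
    by (intro integrable_real_indicator) (auto simp: less_top[symmetric])
  then have int_\<nu>_1: "integrable \<nu> (\<lambda>x. indicator A x * 1 :: real)"
    by simp
  have close: "norm (g x - g x0) \<le> \<epsilon>" if "x \<in> A" for x
    using osc[OF that x0] .
  have "norm ((\<integral>x. indicator A x * (g x * of_real (f x)) \<partial>\<mu>) - g x0 * of_real (measure \<nu> A))
      \<le> \<epsilon> * measure \<nu> A"
    using norm_integral_weighted_minus_const_le[OF int_\<mu> f(3) close] by (simp add: mass)
  moreover have "norm (g x0 * of_real (measure \<nu> A) - (\<integral>x. indicator A x * g x \<partial>\<nu>)) \<le> \<epsilon> * measure \<nu> A"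
    using norm_integral_weighted_minus_const_le[OF int_\<nu> int_\<nu>_1 _ close]
      space_eq sets.sets_into_space[OF A]
    by (simp add: Int_absorb2 norm_minus_commute)
  ultimately show ?thesis
    using norm_diff_triangle_le by fastforce
qed simp
lemma norm_integral_mass_matching_minus_integral_le:
  fixes g :: "'a \<Rightarrow> complex" and f :: "'a \<Rightarrow> real"
  assumes \<mu>: "finite_measure \<mu>" and \<nu>: "finite_measure \<nu>" and sets_eq: "sets \<nu> = sets \<mu>"
    and A: "ae_partition \<nu> A K"
    and f: "f \<in> borel_measurable \<mu>" "bounded (range f)" "\<And>x. 0 \<le> f x"
    and f_off: "\<And>x. x \<notin> (\<Union>j<K. A j) \<Longrightarrow> f x = 0"
    and mass: "\<And>j. j < K \<Longrightarrow> (\<integral>x. indicator (A j) x * f x \<partial>\<mu>) = measure \<nu> (A j)"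
    and g: "g \<in> borel_measurable \<mu>" "bounded (g ` space \<mu>)"
    and osc: "\<And>j x y. j < K \<Longrightarrow> x \<in> A j \<Longrightarrow> y \<in> A j \<Longrightarrow> norm (g x - g y) \<le> \<epsilon>"
  shows "norm ((\<integral>x. g x * of_real (f x) \<partial>\<mu>) - (\<integral>x. g x \<partial>\<nu>)) \<le> 2 * \<epsilon> * measure \<nu> (space \<nu>)"
proof -
  interpret \<mu>: finite_measure \<mu> by (rule \<mu>)
  interpret \<nu>: finite_measure \<nu> by (rule \<nu>)
  have A_sets: "A j \<in> sets \<nu>" if "j < K" for j
    using A that by (auto simp: ae_partition_def)
  have disj: "disjoint_family_on A {..<K}"
    using A by (simp add: ae_partition_def)
  have space_eq: "space \<nu> = space \<mu>"
    using sets_eq by (rule sets_eq_imp_space_eq)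
  have g_\<nu>: "g \<in> borel_measurable \<nu>"
    using g(1) by (subst measurable_cong_sets[OF sets_eq refl])
  obtain Bf where "0 < Bf" "\<And>x. norm (f x) \<le> Bf"
    using f(2) by (auto simp: bounded_pos)
  moreover obtain Bg where "0 < Bg" "\<And>x. x \<in> space \<mu> \<Longrightarrow> norm (g x) \<le> Bg"
    using g(2) by (auto simp: bounded_pos)
  ultimately have int_\<mu>: "integrable \<mu> (\<lambda>x. g x * of_real (f x))" and int_\<nu>: "integrable \<nu> g"
    using g(1) f(1) g_\<nu> space_eq
    by (auto intro!: \<mu>.integrable_const_bound[where B = "Bg * Bf"] \<nu>.integrable_const_bound[where B = Bg]
        AE_I2 mult_mono simp: norm_mult)
  have "space \<nu> - (\<Union>j<K. A j) \<in> null_sets \<nu>"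
    using A A_sets by (auto simp: ae_partition_def null_sets_def intro!: sets.Diff sets.finite_UN)
  then have "AE x in \<nu>. x \<in> (\<Union>j<K. A j)"
    by (rule AE_I') blast
  then have "(\<integral>x. g x \<partial>\<nu>) = (\<Sum>j<K. \<integral>x. indicator (A j) x * g x \<partial>\<nu>)"
    using int_\<nu> A_sets disj by (intro integral_eq_sum_indicator_integrals) auto
  moreover have "(\<integral>x. g x * of_real (f x) \<partial>\<mu>) = (\<Sum>j<K. \<integral>x. indicator (A j) x * (g x * of_real (f x)) \<partial>\<mu>)"
    using int_\<mu> A_sets disj f_off sets_eq by (intro integral_eq_sum_indicator_integrals) auto
  ultimately have "norm ((\<integral>x. g x * of_real (f x) \<partial>\<mu>) - (\<integral>x. g x \<partial>\<nu>))
      \<le> (\<Sum>j<K. norm ((\<integral>x. indicator (A j) x * (g x * of_real (f x)) \<partial>\<mu>)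
          - (\<integral>x. indicator (A j) x * g x \<partial>\<nu>)))"
    by (simp flip: sum_subtractf add: norm_sum)
  also have "\<dots> \<le> (\<Sum>j<K. 2 * \<epsilon> * measure \<nu> (A j))"
    using A_sets sets_eq
    by (intro sum_mono norm_integral_mass_matching_block_le[OF \<mu> \<nu> sets_eq _ f(1,2,3) _ g] mass osc) auto
  also have "\<dots> = 2 * \<epsilon> * measure \<nu> (\<Union>j<K. A j)"
    using A_sets disj by (subst \<nu>.finite_measure_finite_Union) (auto simp: sum_distrib_left)
  also have "measure \<nu> (\<Union>j<K. A j) = measure \<nu> (space \<nu>)"
    using A A_sets \<nu>.finite_measure_compl[of "\<Union>j<K. A j"]
    by (auto simp: ae_partition_def measure_def)
  finally show ?thesis .
qed

lemma integral_mass_matching_density: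
  fixes f :: "'a \<Rightarrow> real"
  assumes "finite_measure \<mu>" "finite_measure \<nu>" "sets \<nu> = sets \<mu>" "ae_partition \<nu> A K"
    and "f \<in> borel_measurable \<mu>" "bounded (range f)" "\<And>x. 0 \<le> f x"
    and "\<And>x. x \<notin> (\<Union>j<K. A j) \<Longrightarrow> f x = 0"
    and "\<And>j. j < K \<Longrightarrow> (\<integral>x. indicator (A j) x * f x \<partial>\<mu>) = measure \<nu> (A j)"
  shows "(\<integral>x. f x \<partial>\<mu>) = measure \<nu> (space \<nu>)"
proof -
  have "norm ((\<integral>x. 1 * of_real (f x) \<partial>\<mu>) - (\<integral>x. 1 \<partial>\<nu>) :: complex) \<le> 2 * 0 * measure \<nu> (space \<nu>)"
    by (rule norm_integral_mass_matching_minus_integral_le[OF assms]) (auto simp: bounded_iff)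
  then have "complex_of_real (\<integral>x. f x \<partial>\<mu>) = of_real (measure \<nu> (space \<nu>))"
    by (simp add: scaleR_conv_of_real)
  then show ?thesis
    by (rule of_real_eq_iff[THEN iffD1])
qed

section \<open>Weak-star approximation on the circle\<close>

lemma exists_arc_partition_ae:
  assumes \<nu>: "finite_measure \<nu>" and sets_\<nu>: "sets \<nu> = sets borelT" and N: "0 < N"
  shows "\<exists>s. ae_partition \<nu> (arc_partition s N) N"
proof -
  interpret finite_measure \<nu> by (rule \<nu>)
  define atoms where "atoms = {x. measure \<nu> {x} \<noteq> 0}"
  define bad where "bad j = {s \<in> {0<..<1}. circ_param (s + j / N) \<in> atoms}" for j :: nat
  have "countable (bad j)" for j
  proof (rule countable_image_inj_on)
    show "countable ((\<lambda>s. circ_param (s + j / N)) ` bad j)"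
      by (rule countable_subset[OF _ countable_support]) (auto simp: bad_def atoms_def)
    show "inj_on (\<lambda>s. circ_param (s + j / N)) (bad j)"
      by (rule inj_onI) (use circ_param_inj in \<open>fastforce simp: bad_def\<close>)
  qed
  then have "countable (\<Union>j<N. bad j)"
    by blast
  moreover have "uncountable {0<..<1 :: real}"
    by (simp add: uncountable_open_interval)
  ultimately obtain s where s: "s \<in> {0<..<1}" "s \<notin> (\<Union>j<N. bad j)"
    by (metis countable_subset subsetI)
  define P where "P = (\<lambda>j::nat. circ_param (s + j / N)) ` {..<N}"
  have P_sets: "P \<in> sets \<nu>"
    using finite_imp_closed[of P] by (auto simp: P_def sets_\<nu> sets_borelT_iff)
  have "emeasure \<nu> P = (\<Sum>x\<in>P. emeasure \<nu> {x})"
    by (rule emeasure_eq_sum_singleton) (auto simp: P_def sets_\<nu> sets_borelT_iff)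
  also have "\<dots> = 0"
    using s by (intro sum.neutral) (auto simp: P_def bad_def atoms_def emeasure_eq_measure)
  finally have "emeasure \<nu> (circ - (\<Union>j<N. arc_partition s N j)) = 0"
    using emeasure_mono[OF circ_minus_arc_partition_subset[OF N, of s] P_sets[unfolded P_def]]
    by (simp add: P_def)
  moreover have "arc_partition s N j \<in> sets \<nu>" for j
    using open_arc_arc_partition[OF N] by (simp add: sets_\<nu> open_arc_imp_sets_borelT)
  ultimately show ?thesis
    using sets_eq_imp_space_eq[OF sets_\<nu>]
    by (auto simp: ae_partition_def disjoint_family_arc_partition)
qed

lemma borel_measurable_logm [measurable]:
  assumes [measurable]: "w \<in> borel_measurable M"
  shows "logm w \<in> borel_measurable M"
  unfolding logm_def by measurable

definition approximant_at_scale ::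
  "(complex \<Rightarrow> real) \<Rightarrow> complex measure \<Rightarrow> real \<Rightarrow> (complex \<Rightarrow> real) \<Rightarrow> bool" where
  "approximant_at_scale w \<nu> \<delta> f \<longleftrightarrow>
     f \<in> borel_measurable mT \<and> bounded (range f) \<and> (\<forall>x. 0 \<le> f x \<and> ennreal (f x) \<le> logm w x) \<and>
     (\<integral>x. f x \<partial>mT) = measure \<nu> circ \<and>
     (\<forall>(g :: complex \<Rightarrow> complex) \<epsilon>. continuous_on circ g \<longrightarrow>
        (\<forall>x\<in>circ. \<forall>y\<in>circ. dist x y \<le> \<delta> \<longrightarrow> dist (g x) (g y) \<le> \<epsilon>) \<longrightarrow>
        dist (\<integral>x. g x * of_real (f x) \<partial>mT) (\<integral>x. g x \<partial>\<nu>) \<le> 2 * measure \<nu> circ * \<epsilon>)"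

lemma exists_approximant_at_scale:
  fixes N :: nat
  assumes w: "w \<in> borel_measurable borelT" and \<nu>: "finite_measure \<nu>" and sets_\<nu>: "sets \<nu> = sets borelT"
    and core: "emeasure \<nu> (core w) = 0" and N: "0 < N"
  shows "\<exists>f. approximant_at_scale w \<nu> (2 * pi / N) f"
proof -
  have sets_eq: "sets \<nu> = sets mT" and space_\<nu>: "space \<nu> = circ"
    using sets_\<nu> sets_eq_imp_space_eq[OF sets_\<nu>] by simp_all
  obtain s where A: "ae_partition \<nu> (arc_partition s N) N"
    using exists_arc_partition_ae[OF \<nu> sets_\<nu> N] by blast
  have logm_meas: "logm w \<in> borel_measurable mT"
    using w by (simp add: measurable_cong_sets[OF sets_mT refl])
  have "(\<integral>\<^sup>+ x. indicator (arc_partition s N j) x * logm w x \<partial>mT) = \<infinity>"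
    if "emeasure \<nu> (arc_partition s N j) \<noteq> 0" for j
    using nn_integral_logm_open_arc_eq_top[OF open_arc_arc_partition[OF N] sets_\<nu> core that] .
  then obtain f where f: "f \<in> borel_measurable mT" "bounded (range f)" "\<And>x. 0 \<le> f x"
      "\<And>x. ennreal (f x) \<le> logm w x" "\<And>x. x \<notin> (\<Union>j<N. arc_partition s N j) \<Longrightarrow> f x = 0"
      "\<And>j. j < N \<Longrightarrow> (\<integral>x. indicator (arc_partition s N j) x * f x \<partial>mT) = measure \<nu> (arc_partition s N j)"
    using exists_mass_matching_density[OF finite_measure_mT \<nu> sets_eq A logm_meas] by blast
  have "dist (\<integral>x. g x * of_real (f x) \<partial>mT) (\<integral>x. g x \<partial>\<nu>) \<le> 2 * measure \<nu> circ * \<epsilon>"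
    if g: "continuous_on circ g"
      and osc: "\<forall>x\<in>circ. \<forall>y\<in>circ. dist x y \<le> 2 * pi / N \<longrightarrow> dist (g x) (g y) \<le> \<epsilon>"
    for g :: "complex \<Rightarrow> complex" and \<epsilon>
  proof -
    have "g \<in> borel_measurable mT"
      using borel_measurable_continuous_on_restrict[OF g] by (simp add: mT_def borelT_def)
    moreover have "bounded (g ` space mT)"
      using compact_continuous_image[OF g] by (simp add: compact_imp_bounded)
    moreover have "norm (g x - g y) \<le> \<epsilon>"
      if "x \<in> arc_partition s N j" "y \<in> arc_partition s N j" for j x y
      using osc dist_arc_partition_le[OF that] that by (auto simp: dist_norm arc_partition_def)
    ultimately have "norm ((\<integral>x. g x * of_real (f x) \<partial>mT) - (\<integral>x. g x \<partial>\<nu>)) \<le> 2 * \<epsilon> * measure \<nu> (space \<nu>)"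
      by (intro norm_integral_mass_matching_minus_integral_le[OF finite_measure_mT \<nu> sets_eq A
            f(1,2,3,5,6)])
    then show ?thesis
      by (simp add: dist_norm space_\<nu> mult_ac)
  qed
  moreover have "(\<integral>x. f x \<partial>mT) = measure \<nu> circ"
    using integral_mass_matching_density[OF finite_measure_mT \<nu> sets_eq A f(1,2,3,5,6)] space_\<nu> by simp
  ultimately show ?thesis
    using f unfolding approximant_at_scale_def by blast
qed

lemma tendsto_of_uniform_estimates:
  fixes g :: "'a::metric_space \<Rightarrow> 'b::metric_space" and a :: "nat \<Rightarrow> 'c::metric_space"
  assumes g: "uniformly_continuous_on S g" and \<delta>: "\<delta> \<longlonglongrightarrow> 0"
    and estimate: "\<And>n \<epsilon>. \<forall>x\<in>S. \<forall>y\<in>S. dist x y \<le> \<delta> n \<longrightarrow> dist (g x) (g y) \<le> \<epsilon> \<Longrightarrow> dist (a n) L \<le> C * \<epsilon>"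
  shows "a \<longlonglongrightarrow> L"
proof (rule tendstoI)
  fix r :: real assume "0 < r"
  define \<epsilon> where "\<epsilon> = r / (\<bar>C\<bar> + 1)"
  have "0 < \<epsilon>"
    using \<open>0 < r\<close> by (simp add: \<epsilon>_def)
  then obtain d where "0 < d" and d: "\<And>x y. x \<in> S \<Longrightarrow> y \<in> S \<Longrightarrow> dist y x < d \<Longrightarrow> dist (g y) (g x) < \<epsilon>"
    using g unfolding uniformly_continuous_on_def by metis
  have "eventually (\<lambda>n. \<delta> n < d) sequentially"
    using \<delta> \<open>0 < d\<close> by (rule order_tendstoD)
  then show "eventually (\<lambda>n. dist (a n) L < r) sequentially"
  proof eventually_elim
    case (elim n)
    have "\<forall>x\<in>S. \<forall>y\<in>S. dist x y \<le> \<delta> n \<longrightarrow> dist (g x) (g y) \<le> \<epsilon>"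
      using elim d by (metis dist_commute le_less_trans less_imp_le)
    then have "dist (a n) L \<le> C * \<epsilon>"
      by (rule estimate)
    also have "C * \<epsilon> \<le> \<bar>C\<bar> * \<epsilon>"
      using \<open>0 < \<epsilon>\<close> by (intro mult_right_mono) auto
    also have "\<bar>C\<bar> * \<epsilon> < r"
      using \<open>0 < r\<close> by (simp add: \<epsilon>_def field_simps)
    finally show ?case .
  qed
qed

theorem mainTheorem11:
  fixes w :: "complex \<Rightarrow> real" and \<nu> :: "complex measure"
  assumes w_int: "integrable mT w"
    and w_nonneg: "\<forall>x\<in>circ. 0 \<le> w x"
    and nu_sets: "sets \<nu> = sets borelT"
    and nu_fin: "finite_measure \<nu>"
    and nu_sing: "singular_wrt \<nu> mT"
    and nu_core: "emeasure \<nu> (core w) = 0"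
  shows "\<exists>f :: nat \<Rightarrow> complex \<Rightarrow> real.
     (\<forall>n. f n \<in> borel_measurable mT \<and> bounded (f n ` circ)) \<and>
     (\<forall>g :: complex \<Rightarrow> complex. continuous_on circ g \<longrightarrow>
        (\<lambda>n. \<integral> x. g x * complex_of_real (f n x) \<partial>mT) \<longlonglongrightarrow> (\<integral> x. g x \<partial>\<nu>)) \<and>
     (\<forall>n. (\<integral> x. f n x \<partial>mT) = measure \<nu> circ) \<and>
     (\<forall>n. \<forall>x\<in>circ. 0 \<le> f n x \<and> ennreal (f n x) \<le> logm w x)"
proof -
  have w_meas: "w \<in> borel_measurable borelT"
    using borel_measurable_integrable[OF w_int] by (simp add: measurable_cong_sets[OF sets_mT refl])
  have "\<exists>f. approximant_at_scale w \<nu> (2 * pi / Suc n) f" for n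
    using exists_approximant_at_scale[OF w_meas nu_fin nu_sets nu_core, of "Suc n"] by simp
  then obtain f where f: "\<And>n. approximant_at_scale w \<nu> (2 * pi / Suc n) (f n)"
    by metis
  have "(\<lambda>n. \<integral>x. g x * of_real (f n x) \<partial>mT) \<longlonglongrightarrow> (\<integral>x. g x \<partial>\<nu>)"
    if g: "continuous_on circ g" for g :: "complex \<Rightarrow> complex"
  proof (rule tendsto_of_uniform_estimates)
    show "uniformly_continuous_on circ g"
      using g by (intro compact_uniformly_continuous) auto
    show "(\<lambda>n. 2 * pi / Suc n) \<longlonglongrightarrow> 0"
      using LIMSEQ_Suc[OF lim_const_over_n[of "2 * pi"]] .
    show "dist (\<integral>x. g x * of_real (f n x) \<partial>mT) (\<integral>x. g x \<partial>\<nu>) \<le> 2 * measure \<nu> circ * \<epsilon>"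
      if "\<forall>x\<in>circ. \<forall>y\<in>circ. dist x y \<le> 2 * pi / Suc n \<longrightarrow> dist (g x) (g y) \<le> \<epsilon>" for n \<epsilon>
      using f[of n] g that unfolding approximant_at_scale_def by blast
  qed
  moreover have "bounded (f n ` circ)" for n
    using f[of n] by (auto simp: approximant_at_scale_def intro: bounded_subset)
  ultimately show ?thesis
    using f unfolding approximant_at_scale_def by blast
qed

end
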